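(* Let $I\subset\mathbb{R}$ be an open interval, let $\bm{a}:I\to\mathbb{R}^2_1$ be a (spacelike or timelike) frontal with Gauss mapping $\bm{\nu}:I\to H^1$ (or $S^1_1$), and let $r:I\to\mathbb{R}^+$ be a smooth positive function. Then the pseudo-circle family $C_{(\bm{a}(t),\pm r(t))}$ creates an envelope if and only if $C_{(\bm{a}(t),\pm r(t))}$ is creative.
   Context: All objects are $C^\infty$. The Minkowski plane $\mathbb{R}^2_1$ is $\mathbb{R}^2$ with the pseudo-scalar product $\langle\bm{x},\bm{y}\rangle=-x_1y_1+x_2y_2$. Set $S^1_1=\{\bm{x}:\langle\bm{x},\bm{x}\rangle=1\}$ and $H^1=\{\bm{x}:\langle\bm{x},\bm{x}\rangle=-1\}$. For a non-lightlike vector $\bm{x}$, $\epsilon_{\bm{x}}=1$ if $\langle\bm{x},\bm{x}\rangle>0$ and $\epsilon_{\bm{x}}=-1$ if $\langle\bm{x},\bm{x}\rangle<0$. A smooth curve $\bm{a}:I\to\mathbb{R}^2_1$ is a spacelike (resp. timelike) frontal if there is a smooth map $\bm{\nu}:I\to H^1$ (resp. $S^1_1$), the Gauss mapping, with $\langle \frac{d\bm{a}}{dt}(t),\bm{\nu}(t)\rangle=0$ for all $t$. Let $\bm{\mu}:I\to S^1_1$ (resp. $H^1$) be a smooth unit vector field with $\langle\bm{\mu},\bm{\nu}\rangle=0$; then $\frac{d\bm{a}}{dt}(t)=\beta(t)\bm{\mu}(t)$ where $\beta(t)=\epsilon_{\bm{\mu}}\langle\bm{\mu}(t),\frac{d\bm{a}}{dt}(t)\rangle$.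 For a positive function $r$, the pseudo-circle families are $C_{(\bm{a}(t),r(t))}=\{\bm{x}:\langle\bm{x}-\bm{a}(t),\bm{x}-\bm{a}(t)\rangle=r(t)^2\}$ and $C_{(\bm{a}(t),-r(t))}=\{\bm{x}:\langle\bm{x}-\bm{a}(t),\bm{x}-\bm{a}(t)\rangle=-r(t)^2\}$. An envelope of $C_{(\bm{a}(t),\pm r(t))}$ is a smooth map $f:I\to\mathbb{R}^2_1$ with (1) $f(t)\in C_{(\bm{a}(t),\pm r(t))}$ and (2) $\langle\frac{df}{dt}(t),f(t)-\bm{a}(t)\rangle=0$ for all $t\in I$. The family $C_{(\bm{a}(t),r(t))}$ is creative if there is a smooth $\tilde{\bm{\nu}}:I\to S^1_1$ with $\frac{dr}{dt}(t)+\beta(t)\langle\tilde{\bm{\nu}}(t),\bm{\mu}(t)\rangle=0$ for all $t$; the family $C_{(\bm{a}(t),-r(t))}$ is creative if there is a smooth $\tilde{\bm{\nu}}:I\to H^1$ with $\frac{dr}{dt}(t)-\beta(t)\langle\tilde{\bm{\nu}}(t),\bm{\mu}(t)\rangle=0$ for all $t$. *)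

theory Defs
  imports "HOL-Analysis.Analysis"
begin

text \<open>The Minkowski plane R^2_1 is modelled as real \<times> real.\<close>

type_synonym vec2 = "real \<times> real"

definition mink :: "vec2 \<Rightarrow> vec2 \<Rightarrow> real" where
  "mink x y = - fst x * fst y + snd x * snd y"

definition S11 :: "vec2 set" where
  "S11 = {x. mink x x = 1}"

definition H1 :: "vec2 set" where
  "H1 = {x. mink x x = -1}"

definition eps :: "vec2 \<Rightarrow> real" where
  "eps x = (if mink x x > 0 then 1 else -1)"

definition nderiv :: "nat \<Rightarrow> (real \<Rightarrow> 'a::real_normed_vector) \<Rightarrow> real \<Rightarrow> 'a" where
  "nderiv n f = ((\<lambda>g t. vector_derivative g (at t)) ^^ n) f"

definition smooth_on :: "real set \<Rightarrow> (real \<Rightarrow> 'a::real_normed_vector) \<Rightarrow> bool" where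
  "smooth_on I f \<longleftrightarrow> (\<forall>n. \<forall>t\<in>I. nderiv n f differentiable (at t))"

definition spacelike_frontal :: "real set \<Rightarrow> (real \<Rightarrow> vec2) \<Rightarrow> (real \<Rightarrow> vec2) \<Rightarrow> bool" where
  "spacelike_frontal I a \<nu> \<longleftrightarrow> smooth_on I a \<and> smooth_on I \<nu> \<and> (\<forall>t\<in>I. \<nu> t \<in> H1) \<and>
     (\<forall>t\<in>I. mink (vector_derivative a (at t)) (\<nu> t) = 0)"

definition timelike_frontal :: "real set \<Rightarrow> (real \<Rightarrow> vec2) \<Rightarrow> (real \<Rightarrow> vec2) \<Rightarrow> bool" where
  "timelike_frontal I a \<nu> \<longleftrightarrow> smooth_on I a \<and> smooth_on I \<nu> \<and> (\<forall>t\<in>I. \<nu> t \<in> S11) \<and>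
     (\<forall>t\<in>I. mink (vector_derivative a (at t)) (\<nu> t) = 0)"

definition frame_compl :: "real set \<Rightarrow> (real \<Rightarrow> vec2) \<Rightarrow> (real \<Rightarrow> vec2) \<Rightarrow> vec2 set \<Rightarrow> bool" where
  "frame_compl I \<nu> \<mu> S \<longleftrightarrow> smooth_on I \<mu> \<and> (\<forall>t\<in>I. \<mu> t \<in> S) \<and> (\<forall>t\<in>I. mink (\<mu> t) (\<nu> t) = 0)"

definition beta :: "(real \<Rightarrow> vec2) \<Rightarrow> (real \<Rightarrow> vec2) \<Rightarrow> real \<Rightarrow> real" where
  "beta a \<mu> t = eps (\<mu> t) * mink (\<mu> t) (vector_derivative a (at t))"

text \<open>Pseudo-circle C_(a, s r) with s = 1 or s = -1:
  <x - a, x - a> = s r^2.\<close>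
definition pcircle :: "vec2 \<Rightarrow> real \<Rightarrow> real \<Rightarrow> vec2 set" where
  "pcircle c s \<rho> = {x. mink (x - c) (x - c) = s * \<rho>\<^sup>2}"

definition is_envelope :: "real set \<Rightarrow> (real \<Rightarrow> vec2) \<Rightarrow> real \<Rightarrow> (real \<Rightarrow> real) \<Rightarrow> (real \<Rightarrow> vec2) \<Rightarrow> bool" where
  "is_envelope I a s r f \<longleftrightarrow> smooth_on I f \<and>
     (\<forall>t\<in>I. f t \<in> pcircle (a t) s (r t)) \<and>
     (\<forall>t\<in>I. mink (vector_derivative f (at t)) (f t - a t) = 0)"

definition creates_envelope :: "real set \<Rightarrow> (real \<Rightarrow> vec2) \<Rightarrow> real \<Rightarrow> (real \<Rightarrow> real) \<Rightarrow> bool" where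
  "creates_envelope I a s r \<longleftrightarrow> (\<exists>f. is_envelope I a s r f)"

definition creative_pos :: "real set \<Rightarrow> (real \<Rightarrow> vec2) \<Rightarrow> (real \<Rightarrow> vec2) \<Rightarrow> (real \<Rightarrow> real) \<Rightarrow> bool" where
  "creative_pos I a \<mu> r \<longleftrightarrow> (\<exists>\<nu>t. smooth_on I \<nu>t \<and> (\<forall>t\<in>I. \<nu>t t \<in> S11) \<and>
     (\<forall>t\<in>I. deriv r t + beta a \<mu> t * mink (\<nu>t t) (\<mu> t) = 0))"

definition creative_neg :: "real set \<Rightarrow> (real \<Rightarrow> vec2) \<Rightarrow> (real \<Rightarrow> vec2) \<Rightarrow> (real \<Rightarrow> real) \<Rightarrow> bool" where
  "creative_neg I a \<mu> r \<longleftrightarrow> (\<exists>\<nu>t. smooth_on I \<nu>t \<and> (\<forall>t\<in>I. \<nu>t t \<in> H1) \<and>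
     (\<forall>t\<in>I. deriv r t - beta a \<mu> t * mink (\<nu>t t) (\<mu> t) = 0))"

end

theory Submission
  imports Defs
begin

text \<open>An envelope f of the family \<langle>x - a, x - a\<rangle> = s r^2 amounts to the field
  \<nu> = (f - a) / r with \<langle>\<nu>, \<nu>\<rangle> = s, and conversely f = a + r \<nu>. For a frontal the velocity
  is a' = \<beta> \<mu>. Differentiating \<langle>f - a, f - a\<rangle> = s r^2 and using the envelope condition
  \<langle>f', f - a\<rangle> = 0 yields s r' + \<beta> \<langle>\<nu>, \<mu>\<rangle> = 0, which is creativity with \<nu> as the
  witness; conversely, since \<langle>\<nu>', \<nu>\<rangle> = 0, creativity makes \<langle>f', f - a\<rangle> vanish.\<close>

lemma mink_commute: "mink x y = mink y x"
  by (simp add: mink_def algebra_simps)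

lemma mink_add_left: "mink (x + y) z = mink x z + mink y z"
  and mink_diff_left: "mink (x - y) z = mink x z - mink y z"
  and mink_scaleR_left: "mink (c *\<^sub>R x) z = c * mink x z"
  and mink_scaleR_right: "mink z (c *\<^sub>R x) = c * mink z x"
  by (simp_all add: mink_def algebra_simps)

lemma bounded_bilinear_mink: "bounded_bilinear mink"
proof
  show "\<exists>K. \<forall>x y. norm (mink x y) \<le> norm x * norm y * K"
  proof (intro exI allI)
    fix x y :: vec2
    have coord_le_norm: "\<bar>fst z\<bar> \<le> norm z" "\<bar>snd z\<bar> \<le> norm z" for z :: vec2
      by (metis norm_fst_le norm_snd_le prod.collapse real_norm_def)+
    have "norm (mink x y) \<le> \<bar>fst x\<bar> * \<bar>fst y\<bar> + \<bar>snd x\<bar> * \<bar>snd y\<bar>"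
      by (simp add: mink_def abs_mult[symmetric])
    also have "\<dots> \<le> norm x * norm y + norm x * norm y"
      by (intro add_mono mult_mono) (simp_all add: coord_le_norm)
    finally show "norm (mink x y) \<le> norm x * norm y * 2" by simp
  qed
qed (simp_all add: mink_def algebra_simps)

lemma mink_orthogonal_eq_scaleR:
  assumes "mink v n = 0" "mink m n = 0" "mink m m = e" "mink n n = - e" "e * e = 1"
  shows "v = (eps m * mink m v) *\<^sub>R m"
proof -
  have "eps m = e"
    using assms(3,5) by (auto simp: eps_def square_eq_1_iff)
  with assms show ?thesis
    by (simp add: prod_eq_iff mink_def) algebra
qed

text \<open>Unlike \<^const>\<open>nderiv\<close>, this recurses on the derivative, so that closure properties
  follow by induction on n.\<close>

fun differentiable_upto :: "nat \<Rightarrow> real set \<Rightarrow> (real \<Rightarrow> 'a::real_normed_vector) \<Rightarrow> bool" where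
  "differentiable_upto 0 I h \<longleftrightarrow> True"
| "differentiable_upto (Suc n) I h \<longleftrightarrow>
     (\<forall>t\<in>I. h differentiable at t) \<and> differentiable_upto n I (\<lambda>t. vector_derivative h (at t))"

lemma differentiable_upto_iff_nderiv:
  "differentiable_upto n I h \<longleftrightarrow> (\<forall>k<n. \<forall>t\<in>I. nderiv k h differentiable at t)"
proof (induction n arbitrary: h)
  case (Suc n)
  have "nderiv (Suc k) h = nderiv k (\<lambda>t. vector_derivative h (at t))" for k
    unfolding nderiv_def by (simp add: funpow_Suc_right del: funpow.simps)
  moreover have "nderiv 0 h = h"
    by (simp add: nderiv_def)
  ultimately show ?case
    using Suc.IH by (auto simp: less_Suc_eq_0_disj)
qed simp

lemma smooth_on_iff_differentiable_upto: "smooth_on I h \<longleftrightarrow> (\<forall>n. differentiable_upto n I h)"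
  unfolding smooth_on_def differentiable_upto_iff_nderiv by blast

lemma differentiable_upto_SucD: "differentiable_upto (Suc n) I h \<Longrightarrow> differentiable_upto n I h"
  by (induction n arbitrary: h) auto

lemma differentiable_upto_has_vector_derivative:
  "differentiable_upto (Suc n) I h \<Longrightarrow> t \<in> I \<Longrightarrow> (h has_vector_derivative vector_derivative h (at t)) (at t)"
  by (simp add: vector_derivative_works)

lemma differentiable_upto_cong:
  assumes "open I" "differentiable_upto n I h" "\<And>t. t \<in> I \<Longrightarrow> h t = k t"
  shows "differentiable_upto n I k"
  using assms(2,3)
proof (induction n arbitrary: h k)
  case (Suc n)
  have k': "(k has_vector_derivative vector_derivative h (at t)) (at t)" if "t \<in> I" for t
    using differentiable_upto_has_vector_derivative[OF Suc.prems(1) that] assms(1) that Suc.prems(2)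
    by (rule has_vector_derivative_transform_within_open) auto
  have "differentiable_upto n I (\<lambda>t. vector_derivative h (at t))"
    using Suc.prems(1) by simp
  moreover have "vector_derivative h (at t) = vector_derivative k (at t)" if "t \<in> I" for t
    using vector_derivative_at[OF k'[OF that]] by simp
  ultimately have "differentiable_upto n I (\<lambda>t. vector_derivative k (at t))"
    by (rule Suc.IH)
  with k' show ?case
    by (auto intro: differentiableI_vector)
qed simp

lemma differentiable_upto_SucI:
  assumes "open I" "\<And>t. t \<in> I \<Longrightarrow> (h has_vector_derivative h' t) (at t)" "differentiable_upto n I h'"
  shows "differentiable_upto (Suc n) I h"
proof -
  have "h' t = vector_derivative h (at t)" if "t \<in> I" for t
    using vector_derivative_at[OF assms(2)[OF that]] by simp
  then have "differentiable_upto n I (\<lambda>t. vector_derivative h (at t))"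
    by (rule differentiable_upto_cong[OF assms(1,3)])
  with assms(2) show ?thesis
    by (auto intro: differentiableI_vector)
qed

context
  fixes I :: "real set"
  assumes I: "open I"
begin

lemma differentiable_upto_const: "differentiable_upto n I (\<lambda>t. c)"
  by (induction n arbitrary: c) (auto intro!: differentiable_upto_SucI[OF I, where h'="\<lambda>t. 0"])

lemma differentiable_upto_add:
  "differentiable_upto n I f \<Longrightarrow> differentiable_upto n I g \<Longrightarrow> differentiable_upto n I (\<lambda>t. f t + g t)"
proof (induction n arbitrary: f g)
  case (Suc n)
  then show ?case
    by (intro differentiable_upto_SucI[OF I,
          where h'="\<lambda>t. vector_derivative f (at t) + vector_derivative g (at t)"]
        has_vector_derivative_add differentiable_upto_has_vector_derivative) auto
qed simp

lemma differentiable_upto_bilinear: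
  assumes "bounded_bilinear p"
  shows "differentiable_upto n I f \<Longrightarrow> differentiable_upto n I g \<Longrightarrow>
    differentiable_upto n I (\<lambda>t. p (f t) (g t))"
proof (induction n arbitrary: f g)
  case (Suc n)
  show ?case
  proof (rule differentiable_upto_SucI[OF I])
    show "((\<lambda>t. p (f t) (g t)) has_vector_derivative
        p (f t) (vector_derivative g (at t)) + p (vector_derivative f (at t)) (g t)) (at t)"
      if "t \<in> I" for t
      using bounded_bilinear.has_vector_derivative[OF assms
          differentiable_upto_has_vector_derivative[OF Suc.prems(1) that]
          differentiable_upto_has_vector_derivative[OF Suc.prems(2) that]] .
    show "differentiable_upto n I
        (\<lambda>t. p (f t) (vector_derivative g (at t)) + p (vector_derivative f (at t)) (g t))"
      using Suc.IH differentiable_upto_SucD[OF Suc.prems(1)] differentiable_upto_SucD[OF Suc.prems(2)]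
        Suc.prems
      by (intro differentiable_upto_add) simp_all
  qed
qed simp

lemma differentiable_upto_inverse:
  fixes r :: "real \<Rightarrow> real"
  assumes "\<And>t. t \<in> I \<Longrightarrow> r t \<noteq> 0"
  shows "differentiable_upto n I r \<Longrightarrow> differentiable_upto n I (\<lambda>t. inverse (r t))"
proof (induction n)
  case (Suc n)
  show ?case
  proof (rule differentiable_upto_SucI[OF I])
    show "((\<lambda>t. inverse (r t)) has_vector_derivative
        (-1) * (vector_derivative r (at t) * (inverse (r t) * inverse (r t)))) (at t)"
      if "t \<in> I" for t
      using DERIV_inverse_fun[OF differentiable_upto_has_vector_derivative[OF Suc.prems that,
            unfolded has_real_derivative_iff_has_vector_derivative[symmetric]] assms[OF that]]
      by (simp add: has_real_derivative_iff_has_vector_derivative[symmetric] power2_eq_square)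
    show "differentiable_upto n I
        (\<lambda>t. (-1) * (vector_derivative r (at t) * (inverse (r t) * inverse (r t))))"
      using Suc.IH differentiable_upto_SucD[OF Suc.prems] Suc.prems
      by (intro differentiable_upto_bilinear[OF bounded_bilinear_mult] differentiable_upto_const) auto
  qed
qed simp

lemma smooth_on_add: "smooth_on I f \<Longrightarrow> smooth_on I g \<Longrightarrow> smooth_on I (\<lambda>t. f t + g t)"
  by (simp add: smooth_on_iff_differentiable_upto differentiable_upto_add)

lemma smooth_on_bilinear:
  "bounded_bilinear p \<Longrightarrow> smooth_on I f \<Longrightarrow> smooth_on I g \<Longrightarrow> smooth_on I (\<lambda>t. p (f t) (g t))"
  by (simp add: smooth_on_iff_differentiable_upto differentiable_upto_bilinear)

lemma smooth_on_scaleR: "smooth_on I c \<Longrightarrow> smooth_on I f \<Longrightarrow> smooth_on I (\<lambda>t. c t *\<^sub>R f t)"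
  by (rule smooth_on_bilinear[OF bounded_bilinear_scaleR])

lemma smooth_on_diff: "smooth_on I f \<Longrightarrow> smooth_on I g \<Longrightarrow> smooth_on I (\<lambda>t. f t - g t)"
  using smooth_on_add[of f "\<lambda>t. (-1) *\<^sub>R g t"] smooth_on_scaleR[of "\<lambda>t. -1" g]
  by (simp add: smooth_on_iff_differentiable_upto differentiable_upto_const)

lemma smooth_on_inverse:
  "smooth_on I r \<Longrightarrow> (\<And>t. t \<in> I \<Longrightarrow> (r t :: real) \<noteq> 0) \<Longrightarrow> smooth_on I (\<lambda>t. inverse (r t))"
  by (simp add: smooth_on_iff_differentiable_upto differentiable_upto_inverse)

end

lemma smooth_on_has_vector_derivative:
  "smooth_on I h \<Longrightarrow> t \<in> I \<Longrightarrow> (h has_vector_derivative vector_derivative h (at t)) (at t)"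
  by (metis smooth_on_iff_differentiable_upto differentiable_upto_has_vector_derivative)

lemma smooth_on_has_real_derivative:
  "smooth_on I r \<Longrightarrow> t \<in> I \<Longrightarrow> (r has_real_derivative deriv r t) (at t)"
  using smooth_on_has_vector_derivative has_real_derivative_iff_has_vector_derivative
  by (metis DERIV_imp_deriv)

lemma mink_self_derivative_eq:
  assumes "open I" "t \<in> I" and h: "(h has_vector_derivative h') (at t)"
    and g: "(g has_real_derivative g') (at t)" and "\<And>s. s \<in> I \<Longrightarrow> mink (h s) (h s) = g s"
  shows "2 * mink h' (h t) = g'"
proof -
  have "((\<lambda>s. mink (h s) (h s)) has_vector_derivative mink (h t) h' + mink h' (h t)) (at t)"
    using bounded_bilinear.has_vector_derivative[OF bounded_bilinear_mink h h] .
  moreover have "((\<lambda>s. mink (h s) (h s)) has_vector_derivative g') (at t)"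
    using g unfolding has_real_derivative_iff_has_vector_derivative
    by (rule has_vector_derivative_transform_within_open[OF _ assms(1,2)]) (simp add: assms(5))
  ultimately show ?thesis
    using vector_derivative_unique_at mink_commute by fastforce
qed

lemma frontal_velocity_eq:
  assumes "(spacelike_frontal I a \<nu> \<and> frame_compl I \<nu> \<mu> S11)
         \<or> (timelike_frontal I a \<nu> \<and> frame_compl I \<nu> \<mu> H1)" "t \<in> I"
  shows "vector_derivative a (at t) = beta a \<mu> t *\<^sub>R \<mu> t"
proof -
  obtain e where "e * e = 1" "mink (\<mu> t) (\<mu> t) = e" "mink (\<nu> t) (\<nu> t) = - e"
    "mink (\<mu> t) (\<nu> t) = 0" "mink (vector_derivative a (at t)) (\<nu> t) = 0"
    using assms
    by (auto simp: spacelike_frontal_def timelike_frontal_def frame_compl_def S11_def H1_def)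
  then show ?thesis
    unfolding beta_def by (intro mink_orthogonal_eq_scaleR)
qed

definition creative :: "real set \<Rightarrow> (real \<Rightarrow> vec2) \<Rightarrow> (real \<Rightarrow> vec2) \<Rightarrow> real \<Rightarrow> (real \<Rightarrow> real) \<Rightarrow> bool" where
  "creative I a \<mu> s r \<longleftrightarrow> (\<exists>\<nu>. smooth_on I \<nu> \<and> (\<forall>t\<in>I. mink (\<nu> t) (\<nu> t) = s) \<and>
     (\<forall>t\<in>I. s * deriv r t + beta a \<mu> t * mink (\<nu> t) (\<mu> t) = 0))"

lemma creative_pos_iff_creative: "creative_pos I a \<mu> r \<longleftrightarrow> creative I a \<mu> 1 r"
  by (simp add: creative_pos_def creative_def S11_def)

lemma creative_neg_iff_creative: "creative_neg I a \<mu> r \<longleftrightarrow> creative I a \<mu> (-1) r"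
  by (simp add: creative_neg_def creative_def H1_def add.commute[of "- _"] eq_commute[of "deriv r _"])

context
  fixes I :: "real set" and a \<mu> :: "real \<Rightarrow> vec2" and r :: "real \<Rightarrow> real"
  assumes I: "open I" and smooth_a: "smooth_on I a" and smooth_r: "smooth_on I r"
    and r_pos: "\<And>t. t \<in> I \<Longrightarrow> r t > 0"
    and velocity: "\<And>t. t \<in> I \<Longrightarrow> vector_derivative a (at t) = beta a \<mu> t *\<^sub>R \<mu> t"
begin

lemma envelope_imp_creative:
  assumes "is_envelope I a s r f"
  shows "creative I a \<mu> s r"
proof -
  have smooth_f: "smooth_on I f"
    and on_circle: "\<And>t. t \<in> I \<Longrightarrow> mink (f t - a t) (f t - a t) = s * (r t)\<^sup>2"
    and tangency: "\<And>t. t \<in> I \<Longrightarrow> mink (vector_derivative f (at t)) (f t - a t) = 0"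
    using assms unfolding is_envelope_def pcircle_def by auto
  define \<nu> where "\<nu> t = inverse (r t) *\<^sub>R (f t - a t)" for t
  have "smooth_on I \<nu>"
    unfolding \<nu>_def using I smooth_f smooth_a smooth_r
    by (intro smooth_on_scaleR smooth_on_inverse smooth_on_diff) (auto dest: r_pos)
  moreover have "mink (\<nu> t) (\<nu> t) = s" if t: "t \<in> I" for t
  proof -
    have "mink (\<nu> t) (\<nu> t) = inverse (r t) * inverse (r t) * mink (f t - a t) (f t - a t)"
      by (simp add: \<nu>_def mink_scaleR_left mink_scaleR_right)
    then show ?thesis
      using on_circle[OF t] r_pos[OF t] by (simp add: field_simps power2_eq_square)
  qed
  moreover have "s * deriv r t + beta a \<mu> t * mink (\<nu> t) (\<mu> t) = 0" if t: "t \<in> I" for t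
  proof -
    have "2 * mink (vector_derivative f (at t) - vector_derivative a (at t)) (f t - a t)
        = s * (2 * r t * deriv r t)"
      using I t on_circle smooth_on_has_real_derivative[OF smooth_r t]
      by (intro mink_self_derivative_eq[where g = "\<lambda>t. s * (r t)\<^sup>2"] has_vector_derivative_diff
          smooth_on_has_vector_derivative[OF smooth_f] smooth_on_has_vector_derivative[OF smooth_a]
          derivative_eq_intros) auto
    moreover have "mink (vector_derivative f (at t) - vector_derivative a (at t)) (f t - a t)
        = - beta a \<mu> t * mink (\<mu> t) (f t - a t)"
      by (simp add: mink_diff_left tangency[OF t] velocity[OF t] mink_scaleR_left)
    ultimately have "beta a \<mu> t * mink (f t - a t) (\<mu> t) = - s * r t * deriv r t"
      by (simp add: mink_commute[of "\<mu> t"])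
    moreover have "beta a \<mu> t * mink (\<nu> t) (\<mu> t)
        = inverse (r t) * (beta a \<mu> t * mink (f t - a t) (\<mu> t))"
      by (simp add: \<nu>_def mink_scaleR_left)
    ultimately show ?thesis
      using r_pos[OF t] by (simp add: field_simps)
  qed
  ultimately show ?thesis
    unfolding creative_def by blast
qed

lemma creative_imp_envelope:
  assumes "creative I a \<mu> s r"
  shows "creates_envelope I a s r"
proof -
  obtain \<nu> where smooth_\<nu>: "smooth_on I \<nu>" and unit: "\<And>t. t \<in> I \<Longrightarrow> mink (\<nu> t) (\<nu> t) = s"
    and creative: "\<And>t. t \<in> I \<Longrightarrow> s * deriv r t + beta a \<mu> t * mink (\<nu> t) (\<mu> t) = 0"
    using assms unfolding creative_def by blast
  define f where "f t = a t + r t *\<^sub>R \<nu> t" for t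
  have "smooth_on I f"
    unfolding f_def using I smooth_a smooth_r smooth_\<nu> by (intro smooth_on_add smooth_on_scaleR)
  moreover have "f t \<in> pcircle (a t) s (r t)" if "t \<in> I" for t
    using unit[OF that] by (simp add: f_def pcircle_def mink_scaleR_left mink_scaleR_right power2_eq_square)
  moreover have "mink (vector_derivative f (at t)) (f t - a t) = 0" if t: "t \<in> I" for t
  proof -
    let ?\<nu>' = "vector_derivative \<nu> (at t)"
    have "2 * mink ?\<nu>' (\<nu> t) = 0"
      using I t unit
      by (intro mink_self_derivative_eq[where g = "\<lambda>t. s"] smooth_on_has_vector_derivative[OF smooth_\<nu>])
        auto
    moreover have "(f has_vector_derivative
        beta a \<mu> t *\<^sub>R \<mu> t + (r t *\<^sub>R ?\<nu>' + deriv r t *\<^sub>R \<nu> t)) (at t)"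
      unfolding f_def velocity[OF t, symmetric]
      by (intro has_vector_derivative_add has_vector_derivative_scaleR
          smooth_on_has_vector_derivative[OF smooth_a t] smooth_on_has_vector_derivative[OF smooth_\<nu> t]
          smooth_on_has_real_derivative[OF smooth_r t])
    ultimately show ?thesis
      using creative[OF t] unit[OF t]
      by (simp add: vector_derivative_at f_def mink_add_left mink_scaleR_left mink_scaleR_right
          mink_commute[of "\<mu> t"] algebra_simps)
  qed
  ultimately show ?thesis
    unfolding creates_envelope_def is_envelope_def by blast
qed

lemma creates_envelope_iff_creative: "creates_envelope I a s r \<longleftrightarrow> creative I a \<mu> s r"
  using envelope_imp_creative creative_imp_envelope unfolding creates_envelope_def by blast

end

theorem theorem1:
  fixes I :: "real set" and a \<nu> \<mu> :: "real \<Rightarrow> real \<times> real" and r :: "real \<Rightarrow> real"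
  assumes "open I" and "is_interval I" and "I \<noteq> {}"
    and "(spacelike_frontal I a \<nu> \<and> frame_compl I \<nu> \<mu> S11)
         \<or> (timelike_frontal I a \<nu> \<and> frame_compl I \<nu> \<mu> H1)"
    and "smooth_on I r" and "\<forall>t\<in>I. r t > 0"
  shows "(creates_envelope I a 1 r \<longleftrightarrow> creative_pos I a \<mu> r)
       \<and> (creates_envelope I a (-1) r \<longleftrightarrow> creative_neg I a \<mu> r)"
proof -
  have "smooth_on I a"
    using assms(4) by (auto simp: spacelike_frontal_def timelike_frontal_def)
  moreover have "vector_derivative a (at t) = beta a \<mu> t *\<^sub>R \<mu> t" if "t \<in> I" for t
    using frontal_velocity_eq[OF assms(4) that] .
  ultimately have "creates_envelope I a s r \<longleftrightarrow> creative I a \<mu> s r" for s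
    using creates_envelope_iff_creative assms(1,5,6) by blast
  then show ?thesis
    by (simp add: creative_pos_iff_creative creative_neg_iff_creative)
qed

end
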